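(* Let $n\ge2$, let $\lambda\in\mathbb{R}$ with $\lambda\neq0$, and let $L$ be the operator on $\mathbb{R}[p_1,\dots,p_n]$ (extended to rational functions in the same way) defined by $L\cdot f(p_1,\dots,p_n) = f(L\cdot p_1,\dots,L\cdot p_n)$, where $L\cdot p_1 = \lambda p_1$ and $L\cdot p_k = \lambda p_k + p_{k-1}$ for $k=2,\dots,n$. Then there exist $n-1$ rational functions $$J_k = \frac{G_k}{p_1^k},\qquad k = 1,\dots,n-1,$$ where each $G_k\in\mathbb{R}[p_1,\dots,p_{k+1}]$ is a polynomial of degree $k$, such that $J_1,\dots,J_{n-1}$ are functionally independent outside an algebraic subvariety of positive codimension and $$L\cdot J_k = J_k + \frac{1}{\lambda^k},\qquad k=1,\dots,n-1.$$ *)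

theory Defs
  imports Complex_Main
begin

text \<open>Points of R^n are modelled as functions p :: nat => real; only the
coordinates p 1, ..., p n matter.\<close>

definition monom_val :: "nat \<Rightarrow> (nat \<Rightarrow> nat) \<Rightarrow> (nat \<Rightarrow> real) \<Rightarrow> real" where
  "monom_val m a p = (\<Prod>i\<in>{1..m}. p i ^ a i)"

definition is_poly :: "nat \<Rightarrow> ((nat \<Rightarrow> real) \<Rightarrow> real) \<Rightarrow> bool" where
  "is_poly m f \<longleftrightarrow> (\<exists>A c. finite A \<and> (\<forall>a\<in>A. \<forall>i. i \<notin> {1..m} \<longrightarrow> a i = 0) \<and>
      (\<forall>p. f p = (\<Sum>a\<in>A. c a * monom_val m a p)))"

definition is_poly_deg :: "nat \<Rightarrow> nat \<Rightarrow> ((nat \<Rightarrow> real) \<Rightarrow> real) \<Rightarrow> bool" where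
  "is_poly_deg m d f \<longleftrightarrow> (\<exists>A c. finite A \<and>
      (\<forall>a\<in>A. (\<forall>i. i \<notin> {1..m} \<longrightarrow> a i = 0) \<and> c a \<noteq> 0 \<and> (\<Sum>i\<in>{1..m}. a i) \<le> d) \<and>
      (\<exists>a\<in>A. (\<Sum>i\<in>{1..m}. a i) = d) \<and>
      (\<forall>p. f p = (\<Sum>a\<in>A. c a * monom_val m a p)))"

text \<open>The linear substitution L: (L p)_1 = lam p_1, (L p)_k = lam p_k + p_(k-1), 2 <= k <= n.
  L acts on functions by (L.f)(p) = f(L p).\<close>
definition Lmap :: "real \<Rightarrow> nat \<Rightarrow> (nat \<Rightarrow> real) \<Rightarrow> (nat \<Rightarrow> real)" where
  "Lmap lam n p = (\<lambda>i. if i = 1 then lam * p 1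
                       else if 2 \<le> i \<and> i \<le> n then lam * p i + p (i - 1)
                       else p i)"

definition has_partial :: "((nat \<Rightarrow> real) \<Rightarrow> real) \<Rightarrow> nat \<Rightarrow> (nat \<Rightarrow> real) \<Rightarrow> real \<Rightarrow> bool" where
  "has_partial f j p D \<longleftrightarrow> ((\<lambda>t. f (p(j := t))) has_real_derivative D) (at (p j))"

definition func_indep_at :: "nat \<Rightarrow> nat \<Rightarrow> (nat \<Rightarrow> (nat \<Rightarrow> real) \<Rightarrow> real) \<Rightarrow> (nat \<Rightarrow> real) \<Rightarrow> bool" where
  "func_indep_at n r J p \<longleftrightarrow> (\<exists>D. (\<forall>k\<in>{1..r}. \<forall>j\<in>{1..n}. has_partial (J k) j p (D k j)) \<and>
      (\<forall>c. (\<forall>j\<in>{1..n}. (\<Sum>k=1..r. c k * D k j) = 0) \<longrightarrow> (\<forall>k\<in>{1..r}. c k = 0)))"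

end

theory Submission
  imports Defs
begin

text \<open>Put \<open>mu = 1/lam\<close>, \<open>u_m = p_(m+1)/p_1\<close> (so \<open>u_0 = 1\<close>) and \<open>x = u_1\<close>. The substitution \<open>L\<close>
  sends \<open>u_m\<close> to \<open>u_m + mu u_(m-1)\<close>, i.e. it multiplies \<open>U(t) = \<Sum> u_m t^m\<close> by \<open>1 + mu t\<close>
  (up to order \<open>t^n\<close>), and it sends \<open>x\<close> to \<open>x + mu\<close>, so it divides
  \<open>B(t) = \<Sum> B_j t^j = (1 + mu t)^(-x/mu)\<close> by \<open>1 + mu t\<close>. Hence every coefficient of \<open>B(t) U(t)\<close> is
  \<open>L\<close>-invariant, and \<open>J_k = mu^(k-1) x + \<Sum>j\<le>k. B_j u_(k-j)\<close> satisfies \<open>L.J_k = J_k + mu^k\<close>.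

  Its numerator \<open>G_k = p_1^k J_k\<close> is a homogeneous polynomial of degree \<open>k\<close> in \<open>p_1, ..., p_(k+1)\<close>,
  and \<open>p_(k+1)\<close> occurs in it only through the term \<open>p_1^(k-1) p_(k+1)\<close>. So the Jacobian of
  \<open>J_1, ..., J_(n-1)\<close> with respect to \<open>p_2, ..., p_n\<close> is triangular with diagonal \<open>1/p_1\<close>,
  and the \<open>J_k\<close> are independent wherever \<open>p_1\<close> is nonzero.\<close>

definition homogeneous_poly :: "nat \<Rightarrow> nat \<Rightarrow> ((nat \<Rightarrow> real) \<Rightarrow> real) \<Rightarrow> bool" where
  "homogeneous_poly m d f \<longleftrightarrow> (\<exists>A c. finite A \<and>
      (\<forall>a\<in>A. (\<forall>i. i \<notin> {1..m} \<longrightarrow> a i = 0) \<and> (\<Sum>i\<in>{1..m}. a i) = d) \<and>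
      (\<forall>p. f p = (\<Sum>a\<in>A. c a * monom_val m a p)))"

lemma homogeneous_polyE:
  assumes "homogeneous_poly m d f"
  obtains A c where "finite A" "\<And>a i. a \<in> A \<Longrightarrow> i \<notin> {1..m} \<Longrightarrow> a i = 0"
    "\<And>a. a \<in> A \<Longrightarrow> (\<Sum>i\<in>{1..m}. a i) = d" "\<And>p. f p = (\<Sum>a\<in>A. c a * monom_val m a p)"
  using assms unfolding homogeneous_poly_def by blast

lemma homogeneous_poly_cong:
  "homogeneous_poly m d f \<Longrightarrow> (\<And>p. f p = g p) \<Longrightarrow> homogeneous_poly m d g"
  unfolding homogeneous_poly_def by simp

lemma homogeneous_poly_const: "homogeneous_poly m 0 (\<lambda>p. r)"
  unfolding homogeneous_poly_def
  by (intro exI[of _ "{\<lambda>i. 0}"] exI[of _ "\<lambda>_. r"]) (auto simp: monom_val_def)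

lemma homogeneous_poly_zero: "homogeneous_poly m d (\<lambda>p. 0)"
  unfolding homogeneous_poly_def by (intro exI[of _ "{}"]) auto

lemma homogeneous_poly_var:
  assumes "i \<in> {1..m}"
  shows "homogeneous_poly m 1 (\<lambda>p. p i)"
proof -
  define e where "e = (\<lambda>j. if j = i then 1 else 0 :: nat)"
  have "monom_val m e p = p i" for p
  proof -
    have "monom_val m e p = (\<Prod>j\<in>{1..m}. if j = i then p j else 1)"
      unfolding monom_val_def e_def by (rule prod.cong) auto
    then show ?thesis using assms by (simp add: prod.delta)
  qed
  then show ?thesis
    unfolding homogeneous_poly_def using assms
    by (intro exI[of _ "{e}"] exI[of _ "\<lambda>_. 1"]) (auto simp: e_def)
qed

lemma homogeneous_poly_add:
  assumes "homogeneous_poly m d f" "homogeneous_poly m d g"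
  shows "homogeneous_poly m d (\<lambda>p. f p + g p)"
proof -
  obtain A c where A: "finite A" "\<And>a i. a \<in> A \<Longrightarrow> i \<notin> {1..m} \<Longrightarrow> a i = 0"
    "\<And>a. a \<in> A \<Longrightarrow> (\<Sum>i\<in>{1..m}. a i) = d" "\<And>p. f p = (\<Sum>a\<in>A. c a * monom_val m a p)"
    using assms(1) by (elim homogeneous_polyE) blast
  obtain B e where B: "finite B" "\<And>a i. a \<in> B \<Longrightarrow> i \<notin> {1..m} \<Longrightarrow> a i = 0"
    "\<And>a. a \<in> B \<Longrightarrow> (\<Sum>i\<in>{1..m}. a i) = d" "\<And>p. g p = (\<Sum>a\<in>B. e a * monom_val m a p)"
    using assms(2) by (elim homogeneous_polyE) blast
  define ce where "ce a = (if a \<in> A then c a else 0) + (if a \<in> B then e a else 0)" for a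
  have "f p + g p = (\<Sum>a\<in>A \<union> B. ce a * monom_val m a p)" for p
  proof -
    have "(\<Sum>a\<in>A \<union> B. (if a \<in> A then c a else 0) * monom_val m a p) = f p"
      unfolding A(4) by (rule sum.mono_neutral_cong_right) (use A B in auto)
    moreover have "(\<Sum>a\<in>A \<union> B. (if a \<in> B then e a else 0) * monom_val m a p) = g p"
      unfolding B(4) by (rule sum.mono_neutral_cong_right) (use A B in auto)
    ultimately show ?thesis by (simp add: ce_def distrib_right sum.distrib)
  qed
  then show ?thesis
    unfolding homogeneous_poly_def using A B by (intro exI[of _ "A \<union> B"] exI[of _ ce]) auto
qed

lemma homogeneous_poly_cmult:
  assumes "homogeneous_poly m d f"
  shows "homogeneous_poly m d (\<lambda>p. r * f p)"
proof -
  obtain A c where "finite A" "\<And>a i. a \<in> A \<Longrightarrow> i \<notin> {1..m} \<Longrightarrow> a i = 0"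
    "\<And>a. a \<in> A \<Longrightarrow> (\<Sum>i\<in>{1..m}. a i) = d" "\<And>p. f p = (\<Sum>a\<in>A. c a * monom_val m a p)"
    using assms by (elim homogeneous_polyE) blast
  then show ?thesis
    unfolding homogeneous_poly_def
    by (intro exI[of _ A] exI[of _ "\<lambda>a. r * c a"]) (auto simp: sum_distrib_left mult.assoc)
qed

lemma monom_val_add: "monom_val m (\<lambda>i. a i + b i) p = monom_val m a p * monom_val m b p"
  unfolding monom_val_def by (simp add: power_add prod.distrib)

lemma homogeneous_poly_mult:
  assumes "homogeneous_poly m d f" "homogeneous_poly m d' g"
  shows "homogeneous_poly m (d + d') (\<lambda>p. f p * g p)"
proof -
  obtain A c where A: "finite A" "\<And>a i. a \<in> A \<Longrightarrow> i \<notin> {1..m} \<Longrightarrow> a i = 0"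
    "\<And>a. a \<in> A \<Longrightarrow> (\<Sum>i\<in>{1..m}. a i) = d" "\<And>p. f p = (\<Sum>a\<in>A. c a * monom_val m a p)"
    using assms(1) by (elim homogeneous_polyE) blast
  obtain B e where B: "finite B" "\<And>a i. a \<in> B \<Longrightarrow> i \<notin> {1..m} \<Longrightarrow> a i = 0"
    "\<And>a. a \<in> B \<Longrightarrow> (\<Sum>i\<in>{1..m}. a i) = d'" "\<And>p. g p = (\<Sum>a\<in>B. e a * monom_val m a p)"
    using assms(2) by (elim homogeneous_polyE) blast
  define plus where "plus = (\<lambda>(a::nat\<Rightarrow>nat, b). (\<lambda>i. a i + b i))"
  define coeff where "coeff = (\<lambda>(a, b). c a * e b)"
  define C where "C = plus ` (A \<times> B)"
  define ce where "ce x = (\<Sum>y\<in>{y \<in> A \<times> B. plus y = x}. coeff y)" for x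
  have fin: "finite (A \<times> B)" using A B by simp
  have "f p * g p = (\<Sum>x\<in>C. ce x * monom_val m x p)" for p
  proof -
    have "f p * g p = (\<Sum>y\<in>A \<times> B. coeff y * monom_val m (plus y) p)"
      by (simp add: A(4) B(4) sum_product sum.cartesian_product coeff_def plus_def
          monom_val_add split_def mult_ac)
    also have "\<dots> = (\<Sum>x\<in>C. \<Sum>y\<in>{y \<in> A \<times> B. plus y = x}. coeff y * monom_val m (plus y) p)"
      by (rule sum.group[symmetric]) (use fin in \<open>auto simp: C_def\<close>)
    also have "\<dots> = (\<Sum>x\<in>C. ce x * monom_val m x p)"
      unfolding ce_def sum_distrib_right by (rule sum.cong) auto
    finally show ?thesis .
  qed
  moreover have "\<And>x i. x \<in> C \<Longrightarrow> i \<notin> {1..m} \<Longrightarrow> x i = 0"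
    and "\<And>x. x \<in> C \<Longrightarrow> (\<Sum>i\<in>{1..m}. x i) = d + d'"
    using A B by (auto simp: C_def plus_def sum.distrib)
  ultimately show ?thesis
    unfolding homogeneous_poly_def using fin C_def by (intro exI[of _ C] exI[of _ ce]) auto
qed

lemma homogeneous_poly_sum:
  "finite S \<Longrightarrow> (\<And>j. j \<in> S \<Longrightarrow> homogeneous_poly m d (F j)) \<Longrightarrow>
    homogeneous_poly m d (\<lambda>p. \<Sum>j\<in>S. F j p)"
  by (induction S rule: finite_induct) (simp_all add: homogeneous_poly_zero homogeneous_poly_add)

lemma homogeneous_poly_prod:
  "finite S \<Longrightarrow> (\<And>j. j \<in> S \<Longrightarrow> homogeneous_poly m 1 (F j)) \<Longrightarrow>
    homogeneous_poly m (card S) (\<lambda>p. \<Prod>j\<in>S. F j p)"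
proof (induction S rule: finite_induct)
  case empty
  then show ?case by (simp add: homogeneous_poly_const)
next
  case (insert x S)
  then show ?case using homogeneous_poly_mult[of m 1 "F x" "card S"] by simp
qed

lemma homogeneous_poly_power:
  "homogeneous_poly m d f \<Longrightarrow> homogeneous_poly m (d * e) (\<lambda>p. f p ^ e)"
proof (induction e)
  case 0
  then show ?case by (simp add: homogeneous_poly_const)
next
  case (Suc e)
  then show ?case using homogeneous_poly_mult[of m d f "d * e"] by (simp add: add.commute)
qed

lemma homogeneous_poly_fun_upd_other:
  assumes "homogeneous_poly m d f" "i \<notin> {1..m}"
  shows "f (p(i := t)) = f p"
proof -
  obtain A c where f: "\<And>p. f p = (\<Sum>a\<in>A. c a * monom_val m a p)"
    using assms(1) by (elim homogeneous_polyE) blast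
  have "monom_val m a (p(i := t)) = monom_val m a p" for a
    unfolding monom_val_def using assms(2) by (intro prod.cong) auto
  then show ?thesis by (simp add: f)
qed

lemma homogeneous_poly_differentiable:
  assumes "homogeneous_poly m d f"
  shows "(\<lambda>t. f (p(j := t))) differentiable (at x)"
proof -
  obtain A c where "finite A" and f: "\<And>p. f p = (\<Sum>a\<in>A. c a * monom_val m a p)"
    using assms by (elim homogeneous_polyE) blast
  have "(\<lambda>t. \<Prod>i\<in>S. (p(j := t)) i ^ a i) differentiable (at x)" if "finite S" for S a
    using that
  proof (induction S rule: finite_induct)
    case (insert y S)
    have "(\<lambda>t. (p(j := t)) y ^ a y) differentiable (at x)"
      by (cases "y = j") auto
    with insert show ?case by simp
  qed simp
  then show ?thesis
    unfolding f monom_val_def using \<open>finite A\<close> by (intro differentiable_sum) auto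
qed

lemma is_poly_if_homogeneous_poly: "homogeneous_poly m d f \<Longrightarrow> is_poly m f"
  unfolding homogeneous_poly_def is_poly_def by blast

lemma is_poly_deg_if_homogeneous_poly:
  assumes "homogeneous_poly m d f" "f p \<noteq> 0"
  shows "is_poly_deg m d f"
proof -
  obtain A c where A: "finite A" "\<And>a i. a \<in> A \<Longrightarrow> i \<notin> {1..m} \<Longrightarrow> a i = 0"
    "\<And>a. a \<in> A \<Longrightarrow> (\<Sum>i\<in>{1..m}. a i) = d" "\<And>p. f p = (\<Sum>a\<in>A. c a * monom_val m a p)"
    using assms(1) by (elim homogeneous_polyE) blast
  define A' where "A' = {a \<in> A. c a \<noteq> 0}"
  have f: "f p = (\<Sum>a\<in>A'. c a * monom_val m a p)" for p
    unfolding A'_def A(4) using A(1) by (auto intro!: sum.mono_neutral_right)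
  have "A' \<noteq> {}" using assms(2) f by auto
  then show ?thesis
    unfolding is_poly_deg_def using A f by (intro exI[of _ A'] exI[of _ c]) (auto simp: A'_def)
qed

text \<open>\<open>hbinom mu j x y\<close> is \<open>(mu x)^j\<close> times the binomial coefficient of \<open>-y/(mu x)\<close> over \<open>j\<close>,
  i.e. the coefficient of \<open>t^j\<close> in \<open>(1 + mu x t)^(-y/(mu x))\<close>, written as a polynomial in \<open>x, y\<close>.
  With \<open>x = p_1, y = p_2\<close> it is \<open>p_1^j B_j\<close>; likewise \<open>scaled_coord m p = p_1^m u_m\<close> and
  \<open>G_poly mu k p = p_1^k J_k\<close>.\<close>
definition hbinom :: "real \<Rightarrow> nat \<Rightarrow> real \<Rightarrow> real \<Rightarrow> real" where
  "hbinom mu j x y = (\<Prod>i<j. - (y + real i * mu * x)) / fact j"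

definition scaled_coord :: "nat \<Rightarrow> (nat \<Rightarrow> real) \<Rightarrow> real" where
  "scaled_coord m p = (if m = 0 then 1 else p 1 ^ (m - 1) * p (m + 1))"

definition G_poly :: "real \<Rightarrow> nat \<Rightarrow> (nat \<Rightarrow> real) \<Rightarrow> real" where
  "G_poly mu k p = mu ^ (k - 1) * p 1 ^ (k - 1) * p 2 +
     (\<Sum>j\<le>k. hbinom mu j (p 1) (p 2) * scaled_coord (k - j) p)"

lemma hbinom_scale: "hbinom mu j (c * x) (c * y) = c ^ j * hbinom mu j x y"
proof -
  have "(\<Prod>i<j. - (c * y + real i * mu * (c * x))) = (\<Prod>i<j. c * - (y + real i * mu * x))"
    by (simp add: algebra_simps)
  then show ?thesis unfolding hbinom_def by (simp add: prod.distrib)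
qed

lemma hbinom_Suc_shift:
  "hbinom mu (Suc j) x (y + mu * x) + mu * x * hbinom mu j x (y + mu * x) = hbinom mu (Suc j) x y"
proof -
  define P where "P = (\<Prod>i<j. - (y + real (Suc i) * mu * x))"
  have 1: "hbinom mu (Suc j) x (y + mu * x) = P * - (y + real (Suc j) * mu * x) / fact (Suc j)"
    unfolding hbinom_def P_def by (simp add: algebra_simps)
  have 2: "hbinom mu j x (y + mu * x) = P / fact j"
    unfolding hbinom_def P_def by (simp add: algebra_simps)
  have 3: "hbinom mu (Suc j) x y = - y * P / fact (Suc j)"
    unfolding hbinom_def P_def prod.lessThan_Suc_shift by (simp add: algebra_simps)
  show ?thesis unfolding 1 2 3 by (simp add: field_simps fact_Suc del: of_nat_Suc)
qed

lemma homogeneous_poly_hbinom: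
  assumes "2 \<le> m"
  shows "homogeneous_poly m j (\<lambda>p. hbinom mu j (p 1) (p 2))"
proof -
  have "homogeneous_poly m (card {..<j}) (\<lambda>p. \<Prod>i<j. (-1) * p 2 + (- (real i * mu)) * p 1)"
    using assms by (intro homogeneous_poly_prod homogeneous_poly_add homogeneous_poly_cmult
        homogeneous_poly_var) auto
  then have "homogeneous_poly m j (\<lambda>p. (1 / fact j) * (\<Prod>i<j. (-1) * p 2 + (- (real i * mu)) * p 1))"
    by (intro homogeneous_poly_cmult) simp
  then show ?thesis by (rule homogeneous_poly_cong) (simp add: hbinom_def algebra_simps)
qed

lemma homogeneous_poly_scaled_coord:
  assumes "r < m"
  shows "homogeneous_poly m r (scaled_coord r)"
proof (cases r)
  case 0
  then show ?thesis
    using homogeneous_poly_const[of m 1] by (auto simp: scaled_coord_def intro: homogeneous_poly_cong)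
next
  case (Suc r')
  have "homogeneous_poly m (1 * r' + 1) (\<lambda>p. p 1 ^ r' * p (r + 1))"
    using assms Suc by (intro homogeneous_poly_mult homogeneous_poly_power homogeneous_poly_var) auto
  then show ?thesis using Suc by (auto simp: scaled_coord_def intro: homogeneous_poly_cong)
qed

lemma homogeneous_poly_G_poly:
  assumes "1 \<le> k"
  shows "homogeneous_poly (k + 1) k (G_poly mu k)"
proof -
  have "homogeneous_poly (k + 1) (1 * (k - 1) + 1) (\<lambda>p. mu ^ (k - 1) * (p 1 ^ (k - 1) * p 2))"
    using assms by (intro homogeneous_poly_cmult homogeneous_poly_mult homogeneous_poly_power
        homogeneous_poly_var) auto
  moreover have "homogeneous_poly (k + 1) k
      (\<lambda>p. \<Sum>j\<le>k. hbinom mu j (p 1) (p 2) * scaled_coord (k - j) p)"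
  proof (intro homogeneous_poly_sum)
    fix j assume "j \<in> {..k}"
    then have "homogeneous_poly (k + 1) (j + (k - j))
        (\<lambda>p. hbinom mu j (p 1) (p 2) * scaled_coord (k - j) p)"
      using assms by (intro homogeneous_poly_mult homogeneous_poly_hbinom homogeneous_poly_scaled_coord) auto
    with \<open>j \<in> {..k}\<close> show "homogeneous_poly (k + 1) k
        (\<lambda>p. hbinom mu j (p 1) (p 2) * scaled_coord (k - j) p)" by simp
  qed simp
  ultimately show ?thesis
    using assms by (auto simp: G_poly_def mult.assoc intro: homogeneous_poly_cong
        dest: homogeneous_poly_add)
qed

lemma Lmap_apply_1: "Lmap lam n p 1 = lam * p 1"
  by (simp add: Lmap_def)

lemma Lmap_apply_2: "2 \<le> n \<Longrightarrow> Lmap lam n p 2 = lam * p 2 + p 1"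
  by (simp add: Lmap_def)

lemma p1_mult_scaled_coord: "p 1 * scaled_coord m p = p 1 ^ m * p (m + 1)"
  by (cases m) (simp_all add: scaled_coord_def)

lemma scaled_coord_Suc_Lmap:
  assumes "lam \<noteq> 0" "Suc m < n"
  shows "scaled_coord (Suc m) (Lmap lam n p) =
    lam ^ Suc m * (scaled_coord (Suc m) p + p 1 / lam * scaled_coord m p)"
proof -
  have "Lmap lam n p 1 = lam * p 1" "Lmap lam n p (Suc m + 1) = lam * p (Suc m + 1) + p (m + 1)"
    using assms by (simp_all add: Lmap_def)
  then show ?thesis
    using assms(1) p1_mult_scaled_coord[of p m]
    by (simp add: scaled_coord_def power_mult_distrib field_simps)
qed

text \<open>In terms of generating functions: \<open>B = (1 + a t) B'\<close> and \<open>V' = (1 + a t) V\<close> give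
  \<open>B' V' = B V\<close>.\<close>
lemma convolution_transfer_factor:
  fixes b b' v v' :: "nat \<Rightarrow> real"
  assumes "b' 0 = b 0" "\<And>j. b (Suc j) = b' (Suc j) + a * b' j"
    and "v' 0 = v 0" "\<And>m. m < k \<Longrightarrow> v' (Suc m) = v (Suc m) + a * v m"
  shows "(\<Sum>j\<le>k. b' j * v' (k - j)) = (\<Sum>j\<le>k. b j * v (k - j))"
proof (cases k)
  case 0
  then show ?thesis using assms by simp
next
  case (Suc k')
  have "(\<Sum>j\<le>k. b' j * v' (k - j)) = (\<Sum>j\<le>k'. b' j * v' (Suc (k' - j))) + b' k * v' 0"
    unfolding Suc sum.atMost_Suc by (simp add: Suc_diff_le)
  also have "\<dots> = (\<Sum>j\<le>k'. b' j * v (Suc (k' - j))) + b' k * v 0 + a * (\<Sum>j\<le>k'. b' j * v (k' - j))"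
    using assms(3,4) Suc by (simp add: algebra_simps sum.distrib sum_distrib_left)
  also have "(\<Sum>j\<le>k'. b' j * v (Suc (k' - j))) + b' k * v 0 = (\<Sum>j\<le>k. b' j * v (k - j))"
    unfolding Suc sum.atMost_Suc by (simp add: Suc_diff_le)
  also have "(\<Sum>j\<le>k. b' j * v (k - j)) + a * (\<Sum>j\<le>k'. b' j * v (k' - j)) =
      b' 0 * v k + (\<Sum>j\<le>k'. (b' (Suc j) + a * b' j) * v (k' - j))"
    unfolding Suc sum.atMost_Suc_shift by (simp add: algebra_simps sum.distrib sum_distrib_left)
  also have "\<dots> = (\<Sum>j\<le>k. b j * v (k - j))"
    unfolding Suc sum.atMost_Suc_shift using assms(1,2) by simp
  finally show ?thesis .
qed

lemma sum_hbinom_scaled_coord_Lmap: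
  assumes "lam \<noteq> 0" "1 \<le> k" "k < n"
  shows "(\<Sum>j\<le>k. hbinom (1 / lam) j (Lmap lam n p 1) (Lmap lam n p 2) * scaled_coord (k - j) (Lmap lam n p))
    = lam ^ k * (\<Sum>j\<le>k. hbinom (1 / lam) j (p 1) (p 2) * scaled_coord (k - j) p)"
proof -
  define mu where "mu = 1 / lam"
  define q where "q = Lmap lam n p"
  define b where "b j = hbinom mu j (p 1) (p 2)" for j
  define b' where "b' j = hbinom mu j (p 1) (p 2 + mu * p 1)" for j
  define v where "v m = scaled_coord m p" for m
  define v' where "v' m = scaled_coord m q / lam ^ m" for m
  have q1: "q 1 = lam * p 1"
    unfolding q_def by (rule Lmap_apply_1)
  have n: "2 \<le> n" using assms by simp
  have q2: "q 2 = lam * (p 2 + mu * p 1)"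
    using assms(1) unfolding q_def mu_def Lmap_apply_2[OF n] by (simp add: field_simps)
  have "(\<Sum>j\<le>k. hbinom mu j (q 1) (q 2) * scaled_coord (k - j) q) =
      (\<Sum>j\<le>k. lam ^ k * (b' j * v' (k - j)))"
  proof (rule sum.cong)
    fix j assume "j \<in> {..k}"
    then have "lam ^ j * lam ^ (k - j) = lam ^ k" by (simp flip: power_add)
    then show "hbinom mu j (q 1) (q 2) * scaled_coord (k - j) q = lam ^ k * (b' j * v' (k - j))"
      using assms(1) unfolding q1 q2 hbinom_scale b'_def v'_def by (simp add: field_simps)
  qed simp
  also have "(\<Sum>j\<le>k. b' j * v' (k - j)) = (\<Sum>j\<le>k. b j * v (k - j))"
  proof (rule convolution_transfer_factor[where a = "mu * p 1"])
    show "v' (Suc m) = v (Suc m) + mu * p 1 * v m" if "m < k" for m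
      using that assms unfolding v'_def v_def q_def mu_def
      by (simp add: scaled_coord_Suc_Lmap field_simps)
    show "b (Suc j) = b' (Suc j) + mu * p 1 * b' j" for j
      unfolding b_def b'_def by (simp add: hbinom_Suc_shift)
  qed (simp_all add: b_def b'_def v_def v'_def hbinom_def scaled_coord_def)
  then have "(\<Sum>j\<le>k. lam ^ k * (b' j * v' (k - j))) = lam ^ k * (\<Sum>j\<le>k. b j * v (k - j))"
    by (simp add: sum_distrib_left[symmetric])
  finally show ?thesis unfolding q_def mu_def b_def v_def .
qed

lemma G_poly_Lmap:
  assumes "lam \<noteq> 0" "1 \<le> k" "k < n"
  shows "G_poly (1 / lam) k (Lmap lam n p) = lam ^ k * G_poly (1 / lam) k p + p 1 ^ k"
proof -
  obtain k' where k: "k = Suc k'" using assms(2) by (cases k) auto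
  have "lam * (1 / lam) = 1" "lam ^ k' * (1 / lam) ^ k' = 1"
    using assms(1) by (simp_all add: power_divide)
  moreover have n: "2 \<le> n" using assms by simp
  ultimately have "(1 / lam) ^ (k - 1) * Lmap lam n p 1 ^ (k - 1) * Lmap lam n p 2 =
      lam ^ k * ((1 / lam) ^ (k - 1) * p 1 ^ (k - 1) * p 2) + p 1 ^ k"
    unfolding k Lmap_apply_1 Lmap_apply_2[OF n] by (simp add: power_mult_distrib algebra_simps)
  with sum_hbinom_scaled_coord_Lmap[OF assms] show ?thesis
    by (simp add: G_poly_def distrib_left)
qed

lemma G_poly_1: "G_poly mu 1 p = p 2"
  by (simp add: G_poly_def hbinom_def scaled_coord_def numeral_2_eq_2)

lemma G_poly_fun_upd_last:
  assumes "1 \<le> k"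
  shows "G_poly mu k (p(k + 1 := t)) = G_poly mu k p + p 1 ^ (k - 1) * (t - p (k + 1))"
proof (cases "k = 1")
  case True
  have "G_poly mu k q = q 2" for q unfolding True by (rule G_poly_1)
  with True show ?thesis by (simp add: numeral_2_eq_2)
next
  case False
  then obtain k' where k: "k = Suc k'" "1 \<le> k'" using assms by (cases k) auto
  define R where "R p = mu ^ k' * p 1 ^ k' * p 2 +
      (\<Sum>j\<le>k'. hbinom mu (Suc j) (p 1) (p 2) * scaled_coord (k' - j) p)" for p
  have G: "G_poly mu k p = R p + p 1 ^ k' * p (k + 1)" for p
    unfolding G_poly_def R_def k(1) sum.atMost_Suc_shift by (simp add: hbinom_def scaled_coord_def)
  have "R (p(k + 1 := t)) = R p"
    unfolding R_def using k by (auto simp: hbinom_def scaled_coord_def intro!: sum.cong prod.cong)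
  then show ?thesis unfolding G using k by (simp add: algebra_simps)
qed

lemma G_poly_nonzero:
  assumes "1 \<le> k"
  shows "\<exists>p. G_poly mu k p \<noteq> 0"
proof -
  let ?p = "\<lambda>_. 1 :: real"
  have "G_poly mu k (?p(k + 1 := 2)) = G_poly mu k ?p + 1"
    using G_poly_fun_upd_last[OF assms] by simp
  then show ?thesis by (metis add_cancel_right_left one_neq_zero)
qed

lemma has_partial_unique: "has_partial f j p D \<Longrightarrow> has_partial f j p D' \<Longrightarrow> D = D'"
  unfolding has_partial_def by (rule DERIV_unique)

lemma has_partial_div_power_exists:
  assumes "homogeneous_poly m d f" "p 1 \<noteq> 0"
  shows "\<exists>D. has_partial (\<lambda>q. f q / q 1 ^ e) j p D"
proof -
  obtain Df where Df: "((\<lambda>t. f (p(j := t))) has_real_derivative Df) (at (p j))"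
    using homogeneous_poly_differentiable[OF assms(1)] real_differentiable_def by blast
  have "(\<lambda>t. (p(j := t)) 1 ^ e) differentiable (at (p j))"
    by (cases "j = 1") auto
  then obtain De where De: "((\<lambda>t. (p(j := t)) 1 ^ e) has_real_derivative De) (at (p j))"
    using real_differentiable_def by blast
  have "(p(j := p j)) 1 ^ e \<noteq> 0" using assms(2) by simp
  from DERIV_divide[OF Df De this] show ?thesis unfolding has_partial_def by blast
qed

lemma has_partial_div_power_other:
  assumes "homogeneous_poly m d f" "1 \<le> m" "m < j"
  shows "has_partial (\<lambda>q. f q / q 1 ^ e) j p 0"
proof -
  have "f (p(j := t)) / (p(j := t)) 1 ^ e = f p / p 1 ^ e" for t
    using assms homogeneous_poly_fun_upd_other[OF assms(1), of j p t] by simp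
  then show ?thesis unfolding has_partial_def by simp
qed

lemma has_partial_G_poly_last:
  assumes "1 \<le> k" "p 1 \<noteq> 0"
  shows "has_partial (\<lambda>q. G_poly mu k q / q 1 ^ k) (k + 1) p (1 / p 1)"
proof -
  have "G_poly mu k (p(k + 1 := t)) / (p(k + 1 := t)) 1 ^ k =
      (G_poly mu k p + p 1 ^ (k - 1) * (t - p (k + 1))) / p 1 ^ k" for t
    using G_poly_fun_upd_last[OF assms(1), of mu p t] assms(1) by simp
  moreover have "((\<lambda>t. (G_poly mu k p + p 1 ^ (k - 1) * (t - p (k + 1))) / p 1 ^ k)
      has_real_derivative (p 1 ^ (k - 1) / p 1 ^ k)) (at (p (k + 1)))"
    using assms(2) by (auto intro!: derivative_eq_intros)
  moreover have "p 1 ^ (k - 1) / p 1 ^ k = 1 / p 1"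
    using assms by (cases k) auto
  ultimately show ?thesis
    unfolding has_partial_def by simp
qed

lemma triangular_combination_eq_zero:
  fixes D :: "nat \<Rightarrow> nat \<Rightarrow> real"
  assumes "\<And>k. k \<in> {1..r} \<Longrightarrow> D k (k + 1) \<noteq> 0"
    and "\<And>k j. k \<in> {1..r} \<Longrightarrow> k + 1 < j \<Longrightarrow> j \<le> r + 1 \<Longrightarrow> D k j = 0"
    and "\<And>j. j \<in> {1..r + 1} \<Longrightarrow> (\<Sum>k = 1..r. c k * D k j) = 0"
    and "k \<in> {1..r}"
  shows "c k = 0"
  using assms
proof (induction r arbitrary: k)
  case 0
  then show ?case by simp
next
  case (Suc r)
  have "(\<Sum>i = 1..r. c i * D i (Suc r + 1)) = 0"
    using Suc.prems(2) by (intro sum.neutral) auto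
  then have "c (Suc r) * D (Suc r) (Suc r + 1) = 0"
    using Suc.prems(3)[of "Suc r + 1"] by simp
  then have last: "c (Suc r) = 0"
    using Suc.prems(1)[of "Suc r"] by simp
  show ?case
  proof (cases "k = Suc r")
    case False
    have "(\<Sum>i = 1..r. c i * D i j) = 0" if "j \<in> {1..r + 1}" for j
      using Suc.prems(3)[of j] that last by simp
    show ?thesis
    proof (rule Suc.IH)
      show "D i (i + 1) \<noteq> 0" if "i \<in> {1..r}" for i
        using Suc.prems(1) that by simp
      show "D i j = 0" if "i \<in> {1..r}" "i + 1 < j" "j \<le> r + 1" for i j
        using Suc.prems(2) that by simp
      show "k \<in> {1..r}"
        using Suc.prems(4) False by auto
    qed fact
  qed (use last in simp)
qed

lemma func_indep_at_triangular:
  assumes "r < n"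
    and exists: "\<And>k j. k \<in> {1..r} \<Longrightarrow> j \<in> {1..n} \<Longrightarrow> \<exists>d. has_partial (J k) j p d"
    and diagonal: "\<And>k. k \<in> {1..r} \<Longrightarrow> \<exists>d. d \<noteq> 0 \<and> has_partial (J k) (k + 1) p d"
    and above: "\<And>k j. k \<in> {1..r} \<Longrightarrow> k + 1 < j \<Longrightarrow> has_partial (J k) j p 0"
  shows "func_indep_at n r J p"
proof -
  define D where "D k j = (SOME d. has_partial (J k) j p d)" for k j
  have D: "has_partial (J k) j p (D k j)" if "k \<in> {1..r}" "j \<in> {1..n}" for k j
    unfolding D_def using exists[OF that] by (rule someI_ex)
  have diagonal_D: "D k (k + 1) \<noteq> 0" if k: "k \<in> {1..r}" for k
  proof -
    obtain d where d: "d \<noteq> 0" "has_partial (J k) (k + 1) p d"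
      using diagonal[OF k] by blast
    have "has_partial (J k) (k + 1) p (D k (k + 1))"
      using D k assms(1) by simp
    then have "D k (k + 1) = d" using d(2) by (rule has_partial_unique)
    with d(1) show ?thesis by simp
  qed
  have above_D: "D k j = 0" if "k \<in> {1..r}" "k + 1 < j" "j \<le> r + 1" for k j
  proof -
    have "has_partial (J k) j p (D k j)"
      using D that assms(1) by simp
    from this above[OF that(1,2)] show ?thesis by (rule has_partial_unique)
  qed
  have "c k = 0"
    if sums: "\<forall>j\<in>{1..n}. (\<Sum>k = 1..r. c k * D k j) = 0" and k: "k \<in> {1..r}" for c k
  proof -
    have "(\<Sum>k = 1..r. c k * D k j) = 0" if "j \<in> {1..r + 1}" for j
      using sums that assms(1) by simp
    from diagonal_D above_D this k show ?thesis by (rule triangular_combination_eq_zero)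
  qed
  with D show ?thesis
    unfolding func_indep_at_def by (intro exI[of _ D] conjI ballI allI impI) auto
qed

lemma func_indep_at_G_poly:
  assumes "2 \<le> n" "p 1 \<noteq> 0"
  shows "func_indep_at n (n - 1) (\<lambda>k q. G_poly mu k q / q 1 ^ k) p"
proof (rule func_indep_at_triangular)
  fix k assume "k \<in> {1..n - 1}"
  then have k: "1 \<le> k" by simp
  then have hom: "homogeneous_poly (k + 1) k (G_poly mu k)" by (rule homogeneous_poly_G_poly)
  show "\<exists>d. has_partial (\<lambda>q. G_poly mu k q / q 1 ^ k) j p d" for j
    using hom assms(2) by (rule has_partial_div_power_exists)
  show "\<exists>d. d \<noteq> 0 \<and> has_partial (\<lambda>q. G_poly mu k q / q 1 ^ k) (k + 1) p d"
  proof -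
    have "has_partial (\<lambda>q. G_poly mu k q / q 1 ^ k) (k + 1) p (1 / p 1)"
      using k assms(2) by (rule has_partial_G_poly_last)
    with assms(2) show ?thesis by (intro exI[of _ "1 / p 1"]) simp
  qed
  show "has_partial (\<lambda>q. G_poly mu k q / q 1 ^ k) j p 0" if "k + 1 < j" for j
    using hom by (rule has_partial_div_power_other) (use that in simp_all)
qed (use assms in simp)

lemma G_poly_div_power_Lmap:
  assumes "lam \<noteq> 0" "1 \<le> k" "k < n" "p 1 \<noteq> 0"
  shows "G_poly (1 / lam) k (Lmap lam n p) / Lmap lam n p 1 ^ k = G_poly (1 / lam) k p / p 1 ^ k + 1 / lam ^ k"
  using assms unfolding Lmap_apply_1 by (simp add: G_poly_Lmap power_mult_distrib field_simps)

theorem corollary3: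
  fixes n :: nat and lam :: real
  assumes "n \<ge> 2" and "lam \<noteq> 0"
  shows "\<exists>G :: nat \<Rightarrow> (nat \<Rightarrow> real) \<Rightarrow> real.
     (\<forall>k\<in>{1..n-1}. is_poly_deg (k + 1) k (G k)) \<and>
     (\<exists>Q. is_poly n Q \<and> (\<exists>p. Q p \<noteq> 0) \<and>
        (\<forall>p. p 1 \<noteq> 0 \<and> Q p \<noteq> 0 \<longrightarrow>
             func_indep_at n (n - 1) (\<lambda>k q. G k q / q 1 ^ k) p)) \<and>
     (\<forall>k\<in>{1..n-1}. \<forall>p. p 1 \<noteq> 0 \<longrightarrow>
        G k (Lmap lam n p) / (Lmap lam n p 1) ^ k = G k p / p 1 ^ k + 1 / lam ^ k)"
proof (intro exI[of _ "G_poly (1 / lam)"] conjI)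
  show "\<forall>k\<in>{1..n-1}. is_poly_deg (k + 1) k (G_poly (1 / lam) k)"
    using homogeneous_poly_G_poly G_poly_nonzero is_poly_deg_if_homogeneous_poly by fastforce
  \<comment> \<open>The exceptional set is just \<open>p_1 = 0\<close>, which is excluded anyway, so \<open>Q\<close> can be constant.\<close>
  show "\<exists>Q. is_poly n Q \<and> (\<exists>p. Q p \<noteq> 0) \<and>
      (\<forall>p. p 1 \<noteq> 0 \<and> Q p \<noteq> 0 \<longrightarrow> func_indep_at n (n - 1) (\<lambda>k q. G_poly (1 / lam) k q / q 1 ^ k) p)"
    using is_poly_if_homogeneous_poly[OF homogeneous_poly_const] func_indep_at_G_poly assms(1)
    by (intro exI[of _ "\<lambda>_. 1"]) auto
  show "\<forall>k\<in>{1..n-1}. \<forall>p. p 1 \<noteq> 0 \<longrightarrow>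
      G_poly (1 / lam) k (Lmap lam n p) / Lmap lam n p 1 ^ k = G_poly (1 / lam) k p / p 1 ^ k + 1 / lam ^ k"
    using G_poly_div_power_Lmap assms by auto
qed

end
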